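(* Let $G$ be a strongly connected digraph with $N>2$ nodes in which all nodes run the Privacy-Preserving Push-Sum Algorithm described in the context. Let $\mathcal A\subset\mathcal V$ be a set of honest-but-curious nodes, $\mathcal L=\mathcal V\setminus\mathcal A$, and $i\in\mathcal L$. If $N_i^{out}\cup N_i^{in}\not\subseteq\mathcal A$, then the privacy of node $i$ is preserved against $\mathcal A$, i.e., for every $\kappa\in\mathbb N$ and every feasible information sequence $\mathcal I_{\mathcal A}(0:\kappa)$, $\mathrm{Diam}(\mathcal I_{\mathcal A}(0:\kappa))=\infty$.
   Context: Digraph conventions: $\mathcal V=\{1,\dots,N\}$, no self-loops; $(j,i)\in\mathcal E$ means node $i$ can send messages to node $j$. $N_i^{in}=\{j:(i,j)\in\mathcal E\}$, $N_i^{out}=\{j:(j,i)\in\mathcal E\}$. Strongly connected: a directed path exists from any node to any other node. Privacy-Preserving Push-Sum Algorithm (each node $i$ has a private real initial state $x_i(0)$; $M>0$ is a fixed constant). Initialization: node $i$ draws $x^\alpha_{i,1}(0)\sim U(-M,M)$ and sets $x^\beta_{i,1}(0)=2x_i(0)-x^\alpha_{i,1}(0)$, $x^\alpha_{i,2}(0)=0$, $x^\beta_{i,2}(0)=2$. Weights: at $k=0$, node $i$ draws the numbers $\{p_{ji}(0):j\in N_i^{out}\cup\{i\}\}$ and $\alpha_i(0)$ independently from $\mathcal N(0,M)$ and normalizes them so that $\sum_{j=1}^N p_{ji}(0)+\alpha_i(0)=1$; at each $k\ge1$, node $i$ draws $\{p_{ji}(k):j\in N_i^{out}\cup\{i\}\}$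 and $\alpha_i(k)$ independently from $U(0,1)$ and normalizes them so that $\sum_{j=1}^N p_{ji}(k)+\alpha_i(k)=1$; in all cases $p_{ji}(k)=0$ if $j\notin N_i^{out}\cup\{i\}$. State update, for $k\ge0$, $l=1,2$: node $i$ sends $p_{ji}(k)x^\alpha_{i,l}(k)$ to each $j\in N_i^{out}$ and updates $$x^\alpha_{i,l}(k+1)=\sum_{j\in N_i^{in}\cup\{i\}}p_{ij}(k)x^\alpha_{j,l}(k)+x^\beta_{i,l}(k),\qquad x^\beta_{i,l}(k+1)=\alpha_i(k)x^\alpha_{i,l}(k).$$ Node $i$'s estimated average is $\hat x^{ave}_i(k+1)=x^\alpha_{i,1}(k+1)/x^\alpha_{i,2}(k+1)$. The substate $x^\beta_{i,l}$ is never transmitted. Honest-but-curious nodes: nodes that follow the protocol, try to infer other nodes' private initial values from the data they receive, and may pool their data. For a set $\mathcal A$ of such nodes, the information available at time $k$ is $\mathcal I_{\mathcal A}(k)=\{\mathcal I_a(k):a\in\mathcal A\}$ with $$\mathcal I_a(k)=\{x^\alpha_{a,l}(k),x^\beta_{a,l}(k),p_{ja}(k),p_{ap}(k)x^\alpha_{p,l}(k): p\in N_a^{in},\ j\in\mathcal V,\ l=1,2\},$$ and $\mathcal I_{\mathcal A}(0:\kappa)=\bigcup_{0\le k\le\kappa}\mathcal I_{\mathcal A}(k)$. For a feasible $\mathcal I_{\mathcal A}(0:\kappa)$, $\Delta(\mathcal I_{\mathcal A}(0:\kappa),i)$ is the set of all values $x_i(0)=(x^\alpha_{i,1}(0)+x^\beta_{i,1}(0))/2$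 for which there exist initial substates $x^\alpha_{n,1}(0),x^\beta_{n,1}(0)$, $n\in\mathcal L$, and weights $p_{jn}(k),\alpha_n(k)$, $n\in\mathcal L$, $j\in\mathcal V$, $k=0,\dots,\kappa$ (satisfying the column normalization $\sum_j p_{jn}(k)+\alpha_n(k)=1$ and the sparsity pattern of the algorithm; at $k=0$ the weights may be arbitrary real numbers, as their generating distribution is Gaussian), such that the quantities of $\mathcal I_{\mathcal A}(0:\kappa)$ generated by the update rules (with $x^\alpha_{n,2}(0)=0$, $x^\beta_{n,2}(0)=2$) coincide with the given ones. $\mathrm{Diam}(\mathcal I_{\mathcal A}(0:\kappa))=\sup\{|x-x'|:x,x'\in\Delta(\mathcal I_{\mathcal A}(0:\kappa),i)\}$. The privacy of node $i\in\mathcal L$ is preserved against $\mathcal A$ if for every $\kappa\in\mathbb N$, $\mathrm{Diam}(\mathcal I_{\mathcal A}(0:\kappa))=\infty$ for every feasible $\mathcal I_{\mathcal A}(0:\kappa)$. *)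

theory Defs
  imports "HOL-Analysis.Analysis"
begin

text \<open>Digraph conventions: nodes are V = {1..N}; a pair (j,i) in E means that node i
  can send messages to node j.\<close>

definition N_in :: "(nat \<times> nat) set \<Rightarrow> nat \<Rightarrow> nat set" where
  "N_in E i = {j. (i, j) \<in> E}"

definition N_out :: "(nat \<times> nat) set \<Rightarrow> nat \<Rightarrow> nat set" where
  "N_out E i = {j. (j, i) \<in> E}"

definition strongly_connected :: "nat set \<Rightarrow> (nat \<times> nat) set \<Rightarrow> bool" where
  "strongly_connected V E \<longleftrightarrow> (\<forall>i\<in>V. \<forall>j\<in>V. i \<noteq> j \<longrightarrow> (i, j) \<in> E\<^sup>+)"

text \<open>Weights: p k j i is p_{ji}(k), al k i is alpha_i(k).
  At k = 0 arbitrary reals (Gaussian support); at k >= 1 positive on the allowed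
  pattern (normalised uniform(0,1) draws); always column-normalised and sparse.\<close>

definition valid_weights ::
  "nat set \<Rightarrow> (nat \<times> nat) set \<Rightarrow> (nat \<Rightarrow> nat \<Rightarrow> nat \<Rightarrow> real) \<Rightarrow> (nat \<Rightarrow> nat \<Rightarrow> real) \<Rightarrow> bool" where
  "valid_weights V E p al \<longleftrightarrow>
     (\<forall>k. \<forall>i\<in>V.
        (\<Sum>j\<in>V. p k j i) + al k i = 1
      \<and> (\<forall>j. j \<notin> N_out E i \<union> {i} \<longrightarrow> p k j i = 0)
      \<and> (k \<ge> 1 \<longrightarrow> al k i > 0 \<and> (\<forall>j\<in>N_out E i \<union> {i}. p k j i > 0)))"

fun traj :: "(nat \<times> nat) set \<Rightarrow> (nat \<Rightarrow> nat \<Rightarrow> nat \<Rightarrow> real) \<Rightarrow> (nat \<Rightarrow> nat \<Rightarrow> real)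
    \<Rightarrow> (nat \<Rightarrow> real) \<Rightarrow> (nat \<Rightarrow> real) \<Rightarrow> nat \<Rightarrow> (nat \<Rightarrow> real) \<times> (nat \<Rightarrow> real)" where
  "traj E p al a0 b0 0 = (a0, b0)"
| "traj E p al a0 b0 (Suc k) =
     (let xa = fst (traj E p al a0 b0 k); xb = snd (traj E p al a0 b0 k) in
      (\<lambda>i. (\<Sum>j\<in>N_in E i \<union> {i}. p k i j * xa j) + xb i, \<lambda>i. al k i * xa i))"

text \<open>x^alpha_{n,l}(k) and x^beta_{n,l}(k), l = 1,2; a0, b0 are the initial
  substates x^alpha_{n,1}(0), x^beta_{n,1}(0); for l = 2 they are 0 and 2.\<close>

definition xA :: "(nat \<times> nat) set \<Rightarrow> (nat \<Rightarrow> nat \<Rightarrow> nat \<Rightarrow> real) \<Rightarrow> (nat \<Rightarrow> nat \<Rightarrow> real)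
    \<Rightarrow> (nat \<Rightarrow> real) \<Rightarrow> (nat \<Rightarrow> real) \<Rightarrow> nat \<Rightarrow> nat \<Rightarrow> nat \<Rightarrow> real" where
  "xA E p al a0 b0 l k n =
     fst (traj E p al (if l = 1 then a0 else (\<lambda>_. 0)) (if l = 1 then b0 else (\<lambda>_. 2)) k) n"

definition xB :: "(nat \<times> nat) set \<Rightarrow> (nat \<Rightarrow> nat \<Rightarrow> nat \<Rightarrow> real) \<Rightarrow> (nat \<Rightarrow> nat \<Rightarrow> real)
    \<Rightarrow> (nat \<Rightarrow> real) \<Rightarrow> (nat \<Rightarrow> real) \<Rightarrow> nat \<Rightarrow> nat \<Rightarrow> nat \<Rightarrow> real" where
  "xB E p al a0 b0 l k n =
     snd (traj E p al (if l = 1 then a0 else (\<lambda>_. 0)) (if l = 1 then b0 else (\<lambda>_. 2)) k) n"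

definition same_info ::
  "nat set \<Rightarrow> (nat \<times> nat) set \<Rightarrow> nat set \<Rightarrow> nat \<Rightarrow>
   (nat \<Rightarrow> nat \<Rightarrow> nat \<Rightarrow> real) \<Rightarrow> (nat \<Rightarrow> nat \<Rightarrow> real) \<Rightarrow> (nat \<Rightarrow> real) \<Rightarrow> (nat \<Rightarrow> real) \<Rightarrow>
   (nat \<Rightarrow> nat \<Rightarrow> nat \<Rightarrow> real) \<Rightarrow> (nat \<Rightarrow> nat \<Rightarrow> real) \<Rightarrow> (nat \<Rightarrow> real) \<Rightarrow> (nat \<Rightarrow> real) \<Rightarrow> bool" where
  "same_info V E A \<kappa> p al a0 b0 p' al' a0' b0' \<longleftrightarrow>
     (\<forall>k\<le>\<kappa>. \<forall>a\<in>A. \<forall>l\<in>{1, 2}.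
        xA E p al a0 b0 l k a = xA E p' al' a0' b0' l k a
      \<and> xB E p al a0 b0 l k a = xB E p' al' a0' b0' l k a
      \<and> (\<forall>j\<in>V. p k j a = p' k j a)
      \<and> (\<forall>q\<in>N_in E a. p k a q * xA E p al a0 b0 l k q = p' k a q * xA E p' al' a0' b0' l k q))"

text \<open>Delta(I_A(0:kappa), i), where I_A(0:kappa) is the information generated by the
  execution (p, al, a0, b0).\<close>

definition Delta ::
  "nat set \<Rightarrow> (nat \<times> nat) set \<Rightarrow> nat set \<Rightarrow> nat \<Rightarrow> nat \<Rightarrow>
   (nat \<Rightarrow> nat \<Rightarrow> nat \<Rightarrow> real) \<Rightarrow> (nat \<Rightarrow> nat \<Rightarrow> real) \<Rightarrow> (nat \<Rightarrow> real) \<Rightarrow> (nat \<Rightarrow> real) \<Rightarrow> real set" where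
  "Delta V E A i \<kappa> p al a0 b0 =
     {(a0' i + b0' i) / 2 | p' al' a0' b0'.
        valid_weights V E p' al' \<and> same_info V E A \<kappa> p al a0 b0 p' al' a0' b0'}"

definition Diam :: "real set \<Rightarrow> ereal" where
  "Diam S = Sup {ereal \<bar>x - y\<bar> | x y. x \<in> S \<and> y \<in> S}"

end

theory Submission
  imports Defs
begin

text \<open>The initial substate \<open>x\<^sup>\<alpha>\<^sub>s\<^sub>,\<^sub>1(0)\<close> of a node \<open>s\<close> leaves \<open>s\<close> only multiplied by the
  time-0 weights of column \<open>s\<close>, which may be arbitrary reals. Hence one can set
  \<open>x\<^sup>\<alpha>\<^sub>s\<^sub>,\<^sub>1(0) = 1\<close>, absorb its old value into those weights, and additionally move an
  arbitrary amount \<open>\<theta>\<close> from \<open>p\<^sub>s\<^sub>s(0)\<close> to \<open>p\<^sub>r\<^sub>s(0)\<close> along an edge \<open>(r, s)\<close>, compensating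
  in the never-transmitted substates \<open>x\<^sup>\<beta>\<close> of \<open>r\<close> and \<open>s\<close>. The states at time 1 and all
  later weights are unchanged, so nodes outside \<open>{r, s}\<close> observe exactly the same data.
  If \<open>r, s \<notin> \<A>\<close> and \<open>i \<in> {r, s}\<close>, the initial value of \<open>i\<close> becomes an affine function
  of \<open>\<theta>\<close> with slope \<open>\<plusminus>1/2\<close>, so every real number is consistent with the adversary's view.\<close>

lemma traj_eq_from_one:
  assumes "traj E p' al' a' b' 1 = traj E p al a b 1"
    and "\<And>k. k \<ge> 1 \<Longrightarrow> p' k = p k \<and> al' k = al k"
    and "k \<ge> 1"
  shows "traj E p' al' a' b' k = traj E p al a b k"
  using assms(3)
proof (induction k rule: nat_induct_at_least)
  case base
  then show ?case using assms(1) by simp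
next
  case (Suc n)
  then show ?case using assms(2)[of n] by (simp add: Let_def)
qed

lemma traj_one_weight_init: "traj E p al (\<lambda>_. 0) (\<lambda>_. 2) 1 = (\<lambda>_. 2, \<lambda>_. 0)"
  by (simp add: Let_def)

lemma finite_N_in: "finite V \<Longrightarrow> E \<subseteq> V \<times> V \<Longrightarrow> finite (N_in E n)"
  unfolding N_in_def by (rule finite_subset[of _ V]) auto

definition residual_mass ::
  "nat set \<Rightarrow> (nat \<Rightarrow> nat \<Rightarrow> nat \<Rightarrow> real) \<Rightarrow> (nat \<Rightarrow> nat \<Rightarrow> real) \<Rightarrow> (nat \<Rightarrow> real) \<Rightarrow> nat \<Rightarrow> nat \<Rightarrow> real"
  where "residual_mass V p al a0 s r = (\<Sum>j\<in>V - {s, r}. p 0 j s * a0 s) + al 0 s * a0 s"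

definition shift_p ::
  "nat set \<Rightarrow> (nat \<Rightarrow> nat \<Rightarrow> nat \<Rightarrow> real) \<Rightarrow> (nat \<Rightarrow> nat \<Rightarrow> real) \<Rightarrow> (nat \<Rightarrow> real) \<Rightarrow> nat \<Rightarrow> nat \<Rightarrow> real
   \<Rightarrow> nat \<Rightarrow> nat \<Rightarrow> nat \<Rightarrow> real" where
  "shift_p V p al a0 s r \<theta> k j n =
     (if k = 0 \<and> n = s then
        (if j = s then 1 - \<theta> - residual_mass V p al a0 s r
         else if j = r then \<theta> else p 0 j s * a0 s)
      else p k j n)"

definition shift_al :: "(nat \<Rightarrow> nat \<Rightarrow> real) \<Rightarrow> (nat \<Rightarrow> real) \<Rightarrow> nat \<Rightarrow> nat \<Rightarrow> nat \<Rightarrow> real" where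
  "shift_al al a0 s k n = (if k = 0 \<and> n = s then al 0 s * a0 s else al k n)"

definition shift_b0 ::
  "nat set \<Rightarrow> (nat \<Rightarrow> nat \<Rightarrow> nat \<Rightarrow> real) \<Rightarrow> (nat \<Rightarrow> nat \<Rightarrow> real) \<Rightarrow> (nat \<Rightarrow> real) \<Rightarrow> (nat \<Rightarrow> real)
   \<Rightarrow> nat \<Rightarrow> nat \<Rightarrow> real \<Rightarrow> nat \<Rightarrow> real" where
  "shift_b0 V p al a0 b0 s r \<theta> n = b0 n - (shift_p V p al a0 s r \<theta> 0 n s - p 0 n s * a0 s)"

lemma shift_p_eq_off_s [simp]: "k \<noteq> 0 \<or> n \<noteq> s \<Longrightarrow> shift_p V p al a0 s r \<theta> k j n = p k j n"
  by (auto simp: shift_p_def)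

lemma shift_b0_eq_off_rs: "n \<noteq> s \<Longrightarrow> n \<noteq> r \<Longrightarrow> shift_b0 V p al a0 b0 s r \<theta> n = b0 n"
  by (simp add: shift_b0_def shift_p_def)

lemma traj_one_shift:
  assumes "finite V" "E \<subseteq> V \<times> V" and "(r, s) \<in> E"
  shows "traj E (shift_p V p al a0 s r \<theta>) (shift_al al a0 s) (a0(s := 1))
           (shift_b0 V p al a0 b0 s r \<theta>) 1 = traj E p al a0 b0 1"
proof -
  let ?p' = "shift_p V p al a0 s r \<theta>"
  define d where "d n = ?p' 0 n s - p 0 n s * a0 s" for n
  have sum_shift: "(\<Sum>j\<in>N_in E n \<union> {n}. ?p' 0 n j * (a0(s := 1)) j)
      = (\<Sum>j\<in>N_in E n \<union> {n}. p 0 n j * a0 j) + d n" for n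
  proof -
    have "?p' 0 n j * (a0(s := 1)) j = p 0 n j * a0 j + (if j = s then d n else 0)" for j
      by (cases "j = s") (auto simp: d_def)
    then have "(\<Sum>j\<in>N_in E n \<union> {n}. ?p' 0 n j * (a0(s := 1)) j)
        = (\<Sum>j\<in>N_in E n \<union> {n}. p 0 n j * a0 j) + (\<Sum>j\<in>N_in E n \<union> {n}. if j = s then d n else 0)"
      by (simp add: sum.distrib)
    moreover have "d n = 0" if "s \<notin> N_in E n \<union> {n}"
    proof -
      \<comment> \<open>only the columns \<open>s\<close> and \<open>r\<close> are shifted, and \<open>s\<close> is an in-neighbour of \<open>r\<close>\<close>
      have "n \<noteq> s" "n \<noteq> r" using that assms(3) by (auto simp: N_in_def)
      then show ?thesis by (simp add: d_def shift_p_def)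
    qed
    moreover have "finite (N_in E n \<union> {n})" using finite_N_in[OF assms(1,2)] by simp
    ultimately show ?thesis by auto
  qed
  have "(\<lambda>n. (\<Sum>j\<in>N_in E n \<union> {n}. ?p' 0 n j * (a0(s := 1)) j) + shift_b0 V p al a0 b0 s r \<theta> n)
      = (\<lambda>n. (\<Sum>j\<in>N_in E n \<union> {n}. p 0 n j * a0 j) + b0 n)"
    unfolding sum_shift by (simp add: shift_b0_def d_def)
  moreover have "(\<lambda>n. shift_al al a0 s 0 n * (a0(s := 1)) n) = (\<lambda>n. al 0 n * a0 n)"
    by (auto simp: shift_al_def)
  ultimately show ?thesis by (simp add: Let_def)
qed

lemma valid_weights_shift:
  assumes "valid_weights V E p al" "finite V" "E \<subseteq> V \<times> V" and "(r, s) \<in> E" "r \<noteq> s"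
  shows "valid_weights V E (shift_p V p al a0 s r \<theta>) (shift_al al a0 s)"
  unfolding valid_weights_def
proof (intro allI ballI)
  fix k n assume n: "n \<in> V"
  let ?p' = "shift_p V p al a0 s r \<theta>"
  show "(\<Sum>j\<in>V. ?p' k j n) + shift_al al a0 s k n = 1
      \<and> (\<forall>j. j \<notin> N_out E n \<union> {n} \<longrightarrow> ?p' k j n = 0)
      \<and> (k \<ge> 1 \<longrightarrow> shift_al al a0 s k n > 0 \<and> (\<forall>j\<in>N_out E n \<union> {n}. ?p' k j n > 0))"
  proof (cases "k = 0 \<and> n = s")
    case False
    then have "shift_al al a0 s k n = al k n" and "\<And>j. ?p' k j n = p k j n"
      by (auto simp: shift_al_def)
    then show ?thesis using assms(1) n by (simp add: valid_weights_def)
  next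
    case True
    have s: "s \<in> V" and r: "r \<in> V" and "r \<in> N_out E s"
      using assms(3,4) by (auto simp: N_out_def)
    have "(\<Sum>j\<in>V. ?p' 0 j s) = ?p' 0 s s + ?p' 0 r s + (\<Sum>j\<in>V - {s} - {r}. ?p' 0 j s)"
      using s r assms(2,5) by (simp add: sum.remove)
    also have "(\<Sum>j\<in>V - {s} - {r}. ?p' 0 j s) = (\<Sum>j\<in>V - {s, r}. p 0 j s * a0 s)"
      by (intro sum.cong) (auto simp: shift_p_def)
    finally have "(\<Sum>j\<in>V. ?p' 0 j s) + shift_al al a0 s 0 s = 1"
      using assms(5) by (simp add: shift_p_def shift_al_def residual_mass_def)
    moreover have "\<forall>j. j \<notin> N_out E s \<union> {s} \<longrightarrow> ?p' 0 j s = 0"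
      using assms(1) s \<open>r \<in> N_out E s\<close> by (auto simp: valid_weights_def shift_p_def)
    ultimately show ?thesis using True by simp
  qed
qed

lemma same_info_shift:
  assumes "finite V" "E \<subseteq> V \<times> V" and "(r, s) \<in> E" and "s \<notin> A" "r \<notin> A"
  shows "same_info W E A \<kappa> p al a0 b0
           (shift_p V p al a0 s r \<theta>) (shift_al al a0 s) (a0(s := 1)) (shift_b0 V p al a0 b0 s r \<theta>)"
  unfolding same_info_def
proof (intro allI impI ballI)
  fix k a l assume "a \<in> A" "l \<in> {1::nat, 2}"
  let ?p' = "shift_p V p al a0 s r \<theta>" and ?al' = "shift_al al a0 s"
  let ?a' = "a0(s := 1)" and ?b' = "shift_b0 V p al a0 b0 s r \<theta>"
  have a: "a \<noteq> s" "a \<noteq> r" using \<open>a \<in> A\<close> assms(4,5) by auto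
  show "xA E p al a0 b0 l k a = xA E ?p' ?al' ?a' ?b' l k a \<and>
        xB E p al a0 b0 l k a = xB E ?p' ?al' ?a' ?b' l k a \<and>
        (\<forall>j\<in>W. p k j a = ?p' k j a) \<and>
        (\<forall>q\<in>N_in E a. p k a q * xA E p al a0 b0 l k q = ?p' k a q * xA E ?p' ?al' ?a' ?b' l k q)"
  proof (cases "k = 0")
    case True
    have "p 0 a q * a0 q = ?p' 0 a q * ?a' q" for q
      using a by (cases "q = s") (auto simp: shift_p_def)
    then have "p 0 a q * xA E p al a0 b0 l 0 q = ?p' 0 a q * xA E ?p' ?al' ?a' ?b' l 0 q" for q
      by (simp add: xA_def)
    moreover have "xA E p al a0 b0 l 0 a = xA E ?p' ?al' ?a' ?b' l 0 a"
      and "xB E p al a0 b0 l 0 a = xB E ?p' ?al' ?a' ?b' l 0 a"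
      using a by (simp_all add: xA_def xB_def shift_b0_eq_off_rs)
    ultimately show ?thesis using True a by simp
  next
    case False
    have later_weights: "?p' m = p m \<and> ?al' m = al m" if "m \<ge> 1" for m
      using that by (auto simp: shift_al_def fun_eq_iff)
    have "traj E ?p' ?al' (if l = 1 then ?a' else (\<lambda>_. 0)) (if l = 1 then ?b' else (\<lambda>_. 2)) k
        = traj E p al (if l = 1 then a0 else (\<lambda>_. 0)) (if l = 1 then b0 else (\<lambda>_. 2)) k"
    proof (rule traj_eq_from_one[OF _ later_weights])
      show "traj E ?p' ?al' (if l = 1 then ?a' else (\<lambda>_. 0)) (if l = 1 then ?b' else (\<lambda>_. 2)) 1
          = traj E p al (if l = 1 then a0 else (\<lambda>_. 0)) (if l = 1 then b0 else (\<lambda>_. 2)) 1"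
        using traj_one_shift[OF assms(1-3)] traj_one_weight_init by simp
      show "k \<ge> 1" using \<open>k \<noteq> 0\<close> by simp
    qed
    then have "xA E p al a0 b0 l k = xA E ?p' ?al' ?a' ?b' l k"
      and "xB E p al a0 b0 l k = xB E ?p' ?al' ?a' ?b' l k"
      unfolding xA_def xB_def by (auto intro!: ext)
    then show ?thesis using False by simp
  qed
qed

lemma shift_initial_value_surj:
  assumes "r \<noteq> s" and "i = s \<or> i = r"
  shows "\<exists>\<theta>. ((a0(s := 1)) i + shift_b0 V p al a0 b0 s r \<theta> i) / 2 = T"
proof (cases "i = s")
  case True
  show ?thesis
    by (rule exI[of _ "2 * T - b0 s - residual_mass V p al a0 s r - p 0 s s * a0 s"])
      (simp add: True shift_b0_def shift_p_def)
next
  case False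
  then show ?thesis
    using assms by (intro exI[of _ "a0 r + b0 r + p 0 r s * a0 s - 2 * T"])
      (auto simp: shift_b0_def shift_p_def)
qed

lemma Delta_eq_UNIV:
  assumes "valid_weights V E p al" "finite V" "E \<subseteq> V \<times> V"
    and "(r, s) \<in> E" "r \<noteq> s" "s \<notin> A" "r \<notin> A" "i = s \<or> i = r"
  shows "Delta V E A i \<kappa> p al a0 b0 = UNIV"
proof -
  have "T \<in> Delta V E A i \<kappa> p al a0 b0" for T
  proof -
    obtain \<theta> where "T = ((a0(s := 1)) i + shift_b0 V p al a0 b0 s r \<theta> i) / 2"
      using shift_initial_value_surj[OF assms(5,8)] by metis
    then show ?thesis
      unfolding Delta_def
      using valid_weights_shift[OF assms(1-5)] same_info_shift[OF assms(2-4,6,7)] by blast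
  qed
  then show ?thesis by blast
qed

lemma Diam_UNIV: "Diam (UNIV :: real set) = \<infinity>"
  unfolding Diam_def
proof (rule antisym)
  have "ereal (real n) \<le> Sup {ereal \<bar>x - y\<bar> | x y. x \<in> (UNIV :: real set) \<and> y \<in> UNIV}" for n
  proof (rule Sup_upper)
    have "ereal (real n) = ereal \<bar>real n - 0\<bar>" by simp
    then show "ereal (real n) \<in> {ereal \<bar>x - y\<bar> | x y. x \<in> (UNIV :: real set) \<and> y \<in> UNIV}"
      by blast
  qed
  then have "(SUP n. ereal (real n)) \<le> Sup {ereal \<bar>x - y\<bar> | x y. x \<in> (UNIV :: real set) \<and> y \<in> UNIV}"
    by (rule SUP_least)
  then show "\<infinity> \<le> Sup {ereal \<bar>x - y\<bar> | x y. x \<in> (UNIV :: real set) \<and> y \<in> UNIV}"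
    by (simp add: SUP_nat_Infty)
qed simp

lemma edge_outside_adversary:
  assumes "\<forall>j. (j, j) \<notin> E" and "i \<notin> A" and "\<not> (N_out E i \<union> N_in E i \<subseteq> A)"
  obtains r s where "(r, s) \<in> E" "r \<noteq> s" "s \<notin> A" "r \<notin> A" "i = s \<or> i = r"
proof -
  obtain m where m: "m \<notin> A" "(m, i) \<in> E \<or> (i, m) \<in> E"
    using assms(3) by (auto simp: N_out_def N_in_def)
  then show ?thesis using that[of m i] that[of i m] assms(1,2) by metis
qed

theorem theorem2:
  fixes N :: nat and E :: "(nat \<times> nat) set" and A :: "nat set" and i :: nat and M :: real
  assumes "N > 2"
    and "E \<subseteq> {1..N} \<times> {1..N}"
    and "\<forall>j. (j, j) \<notin> E"
    and "strongly_connected {1..N} E"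
    and "M > 0"
    and "A \<subset> {1..N}"
    and "i \<in> {1..N} - A"
    and "\<not> (N_out E i \<union> N_in E i \<subseteq> A)"
  shows "\<forall>\<kappa> p al a0 b0.
           valid_weights {1..N} E p al \<and> (\<forall>n\<in>{1..N}. a0 n \<in> {-M<..<M})
           \<longrightarrow> Diam (Delta {1..N} E A i \<kappa> p al a0 b0) = \<infinity>"
proof (intro allI impI)
  fix \<kappa> p al a0 b0
  assume "valid_weights {1..N} E p al \<and> (\<forall>n\<in>{1..N}. a0 n \<in> {-M<..<M})"
  moreover obtain r s where "(r, s) \<in> E" "r \<noteq> s" "s \<notin> A" "r \<notin> A" "i = s \<or> i = r"
    using edge_outside_adversary assms(3,7,8) by blast
  ultimately have "Delta {1..N} E A i \<kappa> p al a0 b0 = UNIV"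
    using Delta_eq_UNIV[OF _ _ assms(2)] by blast
  then show "Diam (Delta {1..N} E A i \<kappa> p al a0 b0) = \<infinity>"
    using Diam_UNIV by simp
qed

end
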